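(* Let $\mathcal{P}=(V_1,\dots,V_k)$ be an $\varepsilon$-regular $k$-partition of an $n$-vertex graph $G$, and let $d_{ij}:=\frac{w_G(V_i,V_j)}{|V_i||V_j|}$. For each $F\subseteq\binom{[k]}{2}$ and each $ab\in F$, all but at most $2k\sqrt{\varepsilon}\,|V_a||V_b|$ pairs $(x_a,x_b)\in V_a\times V_b$ satisfy $$\sum_g\hom_g(F,G)=\Big(\prod_{i\in[k]\setminus\{a,b\}}|V_i|\Big)\Big(w_G(x_a,x_b)\prod_{ij\in F\setminus\{ab\}}d_{ij}\ \pm\ \sqrt{\varepsilon}\,|F|\Big),$$ where the sum is over all $\mathcal{P}$-maps $g\colon[k]\to V(G)$ with $g(a)=x_a$ and $g(b)=x_b$, and "$\pm c$" means that the two sides differ by at most $\big(\prod_{i\ne a,b}|V_i|\big)c$.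
   Context: For a graph $G$, $w_G(u,v)=1$ if $uv\in E(G)$ and $0$ otherwise; $w_G(U,V)=\sum_{u\in U}\sum_{v\in V}w_G(u,v)$. A bipartite graph $(V_1,V_2,E)$ with density $d=w(V_1,V_2)/(|V_1||V_2|)$ is $\varepsilon$-homogeneous if for all $W_1\subseteq V_1$, $W_2\subseteq V_2$: $|w(W_1,W_2)-d|W_1||W_2||\le\varepsilon|V_1||V_2|$. An $\varepsilon$-regular $k$-partition of an $n$-vertex graph $G$ is a partition $V_1,\dots,V_k$ of $V(G)$ with $|V_i|\in\{\lfloor n/k\rfloor,\lceil n/k\rceil\}$ such that for all $i\ne j$ the bipartite graph between $V_i,V_j$ formed by edges of $G$ is $\varepsilon$-homogeneous. A graph $F$ on vertex set $[k]$ is identified with its edge set $F\subseteq\binom{[k]}{2}$. A $\mathcal{P}$-map is a function $g\colon[k]\to V(G)$ with $g(i)\in V_i$ for all $i$, and $\hom_g(F,G)=\prod_{ij\in F}w_G(g(i),g(j))$. *)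

theory Defs
  imports Complex_Main "HOL-Library.FuncSet"
begin

definition graph :: "'v set \<Rightarrow> ('v \<Rightarrow> 'v \<Rightarrow> bool) \<Rightarrow> bool" where
  "graph V E \<longleftrightarrow> finite V \<and> (\<forall>u v. E u v \<longrightarrow> E v u) \<and> (\<forall>u. \<not> E u u)
     \<and> (\<forall>u v. E u v \<longrightarrow> u \<in> V \<and> v \<in> V)"

definition w :: "('v \<Rightarrow> 'v \<Rightarrow> bool) \<Rightarrow> 'v \<Rightarrow> 'v \<Rightarrow> real" where
  "w E u v = (if E u v then 1 else 0)"

definition wset :: "('v \<Rightarrow> 'v \<Rightarrow> bool) \<Rightarrow> 'v set \<Rightarrow> 'v set \<Rightarrow> real" where
  "wset E U W = (\<Sum>u\<in>U. \<Sum>v\<in>W. w E u v)"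

definition density :: "('v \<Rightarrow> 'v \<Rightarrow> bool) \<Rightarrow> 'v set \<Rightarrow> 'v set \<Rightarrow> real" where
  "density E V1 V2 = wset E V1 V2 / (real (card V1) * real (card V2))"

definition homogeneous :: "real \<Rightarrow> ('v \<Rightarrow> 'v \<Rightarrow> bool) \<Rightarrow> 'v set \<Rightarrow> 'v set \<Rightarrow> bool" where
  "homogeneous \<epsilon> E V1 V2 \<longleftrightarrow>
     (\<forall>W1 W2. W1 \<subseteq> V1 \<longrightarrow> W2 \<subseteq> V2 \<longrightarrow>
        \<bar>wset E W1 W2 - density E V1 V2 * real (card W1) * real (card W2)\<bar>
          \<le> \<epsilon> * real (card V1) * real (card V2))"

definition regular_partition :: "real \<Rightarrow> nat \<Rightarrow> (nat \<Rightarrow> 'v set) \<Rightarrow> 'v set \<Rightarrow> ('v \<Rightarrow> 'v \<Rightarrow> bool) \<Rightarrow> bool" where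
  "regular_partition \<epsilon> k P V E \<longleftrightarrow>
     (\<Union>i\<in>{1..k}. P i) = V \<and>
     (\<forall>i\<in>{1..k}. \<forall>j\<in>{1..k}. i \<noteq> j \<longrightarrow> P i \<inter> P j = {}) \<and>
     (\<forall>i\<in>{1..k}. card (P i) = card V div k \<or> card (P i) = (card V + k - 1) div k) \<and>
     (\<forall>i\<in>{1..k}. \<forall>j\<in>{1..k}. i \<noteq> j \<longrightarrow> homogeneous \<epsilon> E (P i) (P j))"

definition Pmaps :: "nat \<Rightarrow> (nat \<Rightarrow> 'v set) \<Rightarrow> (nat \<Rightarrow> 'v) set" where
  "Pmaps k P = (\<Pi>\<^sub>E i\<in>{1..k}. P i)"

definition graph_on :: "nat \<Rightarrow> (nat \<times> nat) set \<Rightarrow> bool" where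
  "graph_on k F \<longleftrightarrow> F \<subseteq> {(i,j). 1 \<le> i \<and> i < j \<and> j \<le> k}"

definition homg :: "(nat \<times> nat) set \<Rightarrow> ('v \<Rightarrow> 'v \<Rightarrow> bool) \<Rightarrow> (nat \<Rightarrow> 'v) \<Rightarrow> real" where
  "homg F E g = (\<Prod>(i,j)\<in>F. w E (g i) (g j))"

end

theory Submission
  imports Defs
begin

(* Let F' = F - {ab}, D the product of the densities d_ij over F', and Q the product of the
   |V_i| with i not in {a, b}.  On the fibre of P-maps through (x_a, x_b) the count hom_g(F)
   equals w(x_a, x_b) hom_g(F'), so it suffices to control the fibre sums of hom_g(F') - D.
   Replacing the edges of F' one at a time by their densities telescopes the total absolute
   fibre deviation into |F'| terms, each for an edge st with an endpoint t outside {a, b}.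
   Once all coordinates but s and t are fixed, the remaining weight is A(g s) B(g t) with
   A, B 0/1-valued, and homogeneity of (V_s, V_t), applied separately to the vertices of V_s
   where the inner sum over V_t is positive and where it is negative, bounds the term by
   2 eps prod |V_i|.  Markov's inequality then leaves at most 2 sqrt eps |V_a| |V_b| pairs
   whose deviation exceeds sqrt eps |F| Q. *)

lemma sum_PiE_remove_filter:
  assumes "j \<in> J" and "\<And>g y. \<Phi> (g(j := y)) = \<Phi> g"
  shows "(\<Sum>g\<in>{g \<in> PiE J P. \<Phi> g}. f g)
    = (\<Sum>h\<in>{h \<in> PiE (J - {j}) P. \<Phi> h}. \<Sum>y\<in>P j. f (h(j := y)))"
proof -
  have "(\<Sum>h\<in>{h \<in> PiE (J - {j}) P. \<Phi> h}. \<Sum>y\<in>P j. f (h(j := y)))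
      = (\<Sum>(h, y)\<in>{h \<in> PiE (J - {j}) P. \<Phi> h} \<times> P j. f (h(j := y)))"
    by (rule sum.cartesian_product)
  also have "\<dots> = (\<Sum>g\<in>{g \<in> PiE J P. \<Phi> g}. f g)"
    using assms
    by (intro sum.reindex_bij_witness[of _ "\<lambda>g. (g(j := undefined), g j)" "\<lambda>(h, y). h(j := y)"])
       (auto simp: PiE_def extensional_def Pi_def)
  finally show ?thesis by simp
qed

lemma sum_PiE_remove:
  "j \<in> J \<Longrightarrow> (\<Sum>g\<in>PiE J P. f g) = (\<Sum>h\<in>PiE (J - {j}) P. \<Sum>y\<in>P j. f (h(j := y)))"
  using sum_PiE_remove_filter[of j J "\<lambda>_. True"] by simp

lemma prod_remove2:
  assumes "finite I" "a \<in> I" "b \<in> I" "a \<noteq> b"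
  shows "prod f I = f a * f b * prod f (I - {a, b})"
proof -
  have "prod f I = f a * prod f (I - {a})"
    using assms(1,2) by (rule prod.remove)
  also have "prod f (I - {a}) = f b * prod f (I - {a} - {b})"
    using assms by (intro prod.remove) auto
  also have "I - {a} - {b} = I - {a, b}" by auto
  finally show ?thesis by (simp add: mult.assoc)
qed

lemma card_exceeding_le:
  fixes f :: "'a \<Rightarrow> real" and M :: real
  assumes "finite A" "\<And>z. z \<in> A \<Longrightarrow> 0 \<le> f z" "0 \<le> c" "0 \<le> M" "sum f A \<le> M * c"
  shows "card {z \<in> A. c < f z} \<le> M"
proof (cases "{z \<in> A. c < f z} = {}")
  case False
  let ?B = "{z \<in> A. c < f z}"
  have "card ?B * c = (\<Sum>z\<in>?B. c)" by simp
  also have "\<dots> < sum f ?B"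
    using assms(1) False by (intro sum_strict_mono) auto
  also have "\<dots> \<le> sum f A"
    using assms(1,2) by (intro sum_mono2) auto
  finally have "card ?B * c < M * c" using assms(5) by linarith
  with assms(3) show ?thesis
    by (auto dest: mult_right_less_imp_less)
next
  case True
  show ?thesis unfolding True using assms(4) by simp
qed

lemma sum_abs_le_twice_subset_bound:
  fixes f :: "'a \<Rightarrow> real"
  assumes "finite X" "\<And>Y. Y \<subseteq> X \<Longrightarrow> \<bar>sum f Y\<bar> \<le> c"
  shows "(\<Sum>x\<in>X. \<bar>f x\<bar>) \<le> 2 * c"
proof -
  let ?Y = "{x \<in> X. 0 \<le> f x}"
  have "(\<Sum>x\<in>X. \<bar>f x\<bar>) = (\<Sum>x\<in>X - ?Y. \<bar>f x\<bar>) + (\<Sum>x\<in>?Y. \<bar>f x\<bar>)"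
    using assms(1) by (intro sum.subset_diff) auto
  also have "\<dots> = (\<Sum>x\<in>X - ?Y. - f x) + (\<Sum>x\<in>?Y. f x)"
    by (intro arg_cong2[where f = "(+)"] sum.cong) auto
  also have "\<dots> = - sum f (X - ?Y) + sum f ?Y"
    by (simp add: sum_negf)
  also have "\<dots> \<le> 2 * c"
    using assms(2)[of ?Y] assms(2)[of "X - ?Y"] by auto
  finally show ?thesis .
qed

lemma prod_zero_one:
  fixes f :: "'a \<Rightarrow> 'b::comm_semiring_1"
  assumes "\<And>x. x \<in> S \<Longrightarrow> f x \<in> {0, 1}"
  shows "prod f S \<in> {0, 1}"
proof (cases "finite S")
  case True
  then show ?thesis using assms
  proof (induction S rule: finite_induct)
    case (insert x S)
    then have "f x \<in> {0, 1}" "prod f S \<in> {0, 1}" by auto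
    with insert.hyps show ?case by auto
  qed simp
qed simp

lemma homg_zero_one: "homg G E g \<in> {0, 1}"
  unfolding homg_def by (rule prod_zero_one) (auto simp: w_def)

lemma homg_split_off_vertex:
  assumes "finite G" "p \<noteq> q" "(p, q) \<notin> G" "(q, p) \<notin> G"
  shows "homg G E (g(p := x, q := y))
    = homg (G - {(u, v). u = q \<or> v = q}) E (g(p := x))
      * homg (G \<inter> {(u, v). u = q \<or> v = q}) E (g(q := y))"
proof -
  let ?Q = "{(u, v). u = q \<or> v = q}"
  have "homg G E (g(p := x, q := y))
      = homg (G \<inter> ?Q) E (g(p := x, q := y)) * homg (G - ?Q) E (g(p := x, q := y))"
    unfolding homg_def using assms(1) by (rule prod.Int_Diff)
  moreover have "homg (G - ?Q) E (g(p := x, q := y)) = homg (G - ?Q) E (g(p := x))"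
    unfolding homg_def by (intro prod.cong) (auto split: prod.splits)
  moreover have "homg (G \<inter> ?Q) E (g(p := x, q := y)) = homg (G \<inter> ?Q) E (g(q := y))"
    unfolding homg_def using assms(2-4) by (intro prod.cong) (auto split: prod.splits)
  ultimately show ?thesis by simp
qed

lemma density_bounds:
  assumes "finite U" "finite W"
  shows "0 \<le> density E U W \<and> density E U W \<le> 1"
proof -
  have "0 \<le> wset E U W"
    unfolding wset_def w_def by (intro sum_nonneg) auto
  moreover have "wset E U W \<le> (\<Sum>u\<in>U. \<Sum>v\<in>W. 1)"
    unfolding wset_def w_def by (intro sum_mono) auto
  ultimately show ?thesis
    unfolding density_def by (cases "card U * card W = 0") (auto simp: divide_le_eq_1)
qed

lemma homogeneous_imp_nonneg:
  assumes "homogeneous \<epsilon> E V1 V2" "finite V1" "finite V2" "V1 \<noteq> {}" "V2 \<noteq> {}"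
  shows "0 \<le> \<epsilon>"
proof -
  have "0 \<le> \<epsilon> * (card V1 * card V2)"
    using assms(1)[unfolded homogeneous_def, rule_format, of "{}" "{}"]
    by (simp add: wset_def mult.assoc)
  moreover have "0 < real (card V1 * card V2)" using assms(2-5) by (simp add: card_gt_0_iff)
  ultimately show ?thesis by (simp add: zero_le_mult_iff)
qed

locale homogeneous_parts =
  fixes E :: "'v \<Rightarrow> 'v \<Rightarrow> bool" and P :: "nat \<Rightarrow> 'v set" and I :: "nat set" and \<epsilon> :: real
  assumes finite_index: "finite I"
    and finite_part: "i \<in> I \<Longrightarrow> finite (P i)"
    and sym_edge: "E u v \<Longrightarrow> E v u"
    and homogeneous_pair: "i \<in> I \<Longrightarrow> j \<in> I \<Longrightarrow> i \<noteq> j \<Longrightarrow> homogeneous \<epsilon> E (P i) (P j)"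
begin

lemma w_commute: "w E x y = w E y x"
  unfolding w_def using sym_edge by metis

lemma density_commute: "density E U W = density E W U"
  unfolding density_def wset_def
  by (subst sum.swap) (simp add: w_commute mult.commute)

lemma eps_nonneg:
  "a \<in> I \<Longrightarrow> b \<in> I \<Longrightarrow> a \<noteq> b \<Longrightarrow> P a \<noteq> {} \<Longrightarrow> P b \<noteq> {} \<Longrightarrow> 0 \<le> \<epsilon>"
  using homogeneous_imp_nonneg homogeneous_pair finite_part by blast

lemma row_deviation_le:
  assumes "p \<in> I" "q \<in> I" "p \<noteq> q" "Y \<subseteq> P q"
  shows "(\<Sum>x\<in>P p. \<bar>\<Sum>y\<in>Y. w E x y - density E (P p) (P q)\<bar>)
    \<le> 2 * (\<epsilon> * card (P p) * card (P q))"
proof (rule sum_abs_le_twice_subset_bound)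
  show "finite (P p)" using assms(1) by (rule finite_part)
  fix X assume "X \<subseteq> P p"
  moreover have "finite Y" using assms(2,4) finite_part finite_subset by blast
  ultimately have "(\<Sum>x\<in>X. \<Sum>y\<in>Y. w E x y - density E (P p) (P q))
      = wset E X Y - density E (P p) (P q) * card X * card Y"
    by (simp add: wset_def sum_subtractf)
  then show "\<bar>\<Sum>x\<in>X. \<Sum>y\<in>Y. w E x y - density E (P p) (P q)\<bar> \<le> \<epsilon> * card (P p) * card (P q)"
    using homogeneous_pair[OF assms(1-3)] \<open>X \<subseteq> P p\<close> assms(4)
    unfolding homogeneous_def by simp
qed

lemma weighted_row_deviation_le:
  assumes "p \<in> I" "q \<in> I" "p \<noteq> q" "\<And>x. \<bar>A x\<bar> \<le> 1" "\<And>y. B y \<in> {0, 1}"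
  shows "(\<Sum>x\<in>P p. \<bar>\<Sum>y\<in>P q. (w E x y - density E (P p) (P q)) * (A x * B y)\<bar>)
    \<le> 2 * \<epsilon> * card (P p) * card (P q)"
proof -
  let ?d = "density E (P p) (P q)" and ?Y = "{y \<in> P q. B y = 1}"
  have "\<bar>\<Sum>y\<in>P q. (w E x y - ?d) * (A x * B y)\<bar> \<le> \<bar>\<Sum>y\<in>?Y. w E x y - ?d\<bar>" for x
  proof -
    have "(\<Sum>y\<in>P q. (w E x y - ?d) * (A x * B y))
        = A x * (\<Sum>y\<in>P q. if B y = 1 then w E x y - ?d else 0)"
      unfolding sum_distrib_left using assms(5) by (intro sum.cong) force+
    also have "\<dots> = A x * (\<Sum>y\<in>?Y. w E x y - ?d)"
      using finite_part[OF assms(2)] by (simp add: sum.inter_filter)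
    finally show ?thesis
      using assms(4)[of x] by (simp add: abs_mult mult_left_le_one_le)
  qed
  then have "(\<Sum>x\<in>P p. \<bar>\<Sum>y\<in>P q. (w E x y - ?d) * (A x * B y)\<bar>) \<le> (\<Sum>x\<in>P p. \<bar>\<Sum>y\<in>?Y. w E x y - ?d\<bar>)"
    by (rule sum_mono)
  also have "\<dots> \<le> 2 * (\<epsilon> * card (P p) * card (P q))"
    using assms(1-3) by (intro row_deviation_le) auto
  finally show ?thesis by simp
qed

definition fibre :: "nat \<Rightarrow> nat \<Rightarrow> 'v \<Rightarrow> 'v \<Rightarrow> (nat \<Rightarrow> 'v) set" where
  "fibre a b xa xb = {g \<in> PiE I P. g a = xa \<and> g b = xb}"

definition fibre_deviation :: "nat \<Rightarrow> nat \<Rightarrow> ((nat \<Rightarrow> 'v) \<Rightarrow> real) \<Rightarrow> real" where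
  "fibre_deviation a b f = (\<Sum>(xa, xb)\<in>P a \<times> P b. \<bar>\<Sum>g\<in>fibre a b xa xb. f g\<bar>)"

lemma fibre_deviation_nonneg: "0 \<le> fibre_deviation a b f"
  unfolding fibre_deviation_def by (intro sum_nonneg) auto

lemma fibre_deviation_add_le:
  "fibre_deviation a b (\<lambda>g. f g + f' g) \<le> fibre_deviation a b f + fibre_deviation a b f'"
  unfolding fibre_deviation_def sum.distrib[symmetric] split_def
  by (intro sum_mono) (simp add: sum.distrib abs_triangle_ineq)

lemma fibre_deviation_scale:
  "0 \<le> c \<Longrightarrow> fibre_deviation a b (\<lambda>g. c * f g) = c * fibre_deviation a b f"
  unfolding fibre_deviation_def split_def
  by (simp add: sum_distrib_left[symmetric] abs_mult)

lemma fibre_deviation_le_sum_over_coordinate: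
  assumes "a \<in> I" "b \<in> I" "q \<in> I - {a, b}"
  shows "fibre_deviation a b f \<le> (\<Sum>g\<in>PiE (I - {q}) P. \<bar>\<Sum>y\<in>P q. f (g(q := y))\<bar>)"
proof -
  let ?S = "PiE (I - {q}) P"
  have fibre_sum: "(\<Sum>g\<in>fibre a b xa xb. f g)
      = (\<Sum>h\<in>{h \<in> ?S. h a = xa \<and> h b = xb}. \<Sum>y\<in>P q. f (h(q := y)))" for xa xb
    unfolding fibre_def using assms by (intro sum_PiE_remove_filter) auto
  have "fibre_deviation a b f
      \<le> (\<Sum>(xa, xb)\<in>P a \<times> P b. \<Sum>h\<in>{h \<in> ?S. h a = xa \<and> h b = xb}. \<bar>\<Sum>y\<in>P q. f (h(q := y))\<bar>)"
    unfolding fibre_deviation_def fibre_sum by (auto intro!: sum_mono sum_abs)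
  also have "\<dots> = (\<Sum>z\<in>P a \<times> P b. \<Sum>h\<in>{h \<in> ?S. (h a, h b) = z}. \<bar>\<Sum>y\<in>P q. f (h(q := y))\<bar>)"
    by (intro sum.cong) auto
  also have "\<dots> = (\<Sum>g\<in>?S. \<bar>\<Sum>y\<in>P q. f (g(q := y))\<bar>)"
    using assms finite_index finite_part
    by (intro sum.group) (auto intro!: finite_PiE simp: PiE_iff)
  finally show ?thesis .
qed

lemma fibre_deviation_edge_le:
  assumes "a \<in> I" "b \<in> I" "p \<in> I" "q \<in> I - {a, b}" "p \<noteq> q"
    and "finite G" "(p, q) \<notin> G" "(q, p) \<notin> G"
  shows "fibre_deviation a b (\<lambda>g. (w E (g p) (g q) - density E (P p) (P q)) * homg G E g)
    \<le> 2 * \<epsilon> * card (PiE I P)"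
proof -
  let ?d = "density E (P p) (P q)" and ?Q = "{(u, v). u = q \<or> v = q}"
  let ?f = "\<lambda>g. (w E (g p) (g q) - ?d) * homg G E g"
  have row: "(\<Sum>x\<in>P p. \<bar>\<Sum>y\<in>P q. ?f (l(p := x, q := y))\<bar>) \<le> 2 * \<epsilon> * card (P p) * card (P q)" for l
  proof -
    let ?A = "\<lambda>x. homg (G - ?Q) E (l(p := x))" and ?B = "\<lambda>y. homg (G \<inter> ?Q) E (l(q := y))"
    have "?f (l(p := x, q := y)) = (w E x y - ?d) * (?A x * ?B y)" for x y
      by (subst homg_split_off_vertex[OF assms(6,5,7,8)]) (use assms(5) in simp)
    then have "(\<Sum>x\<in>P p. \<bar>\<Sum>y\<in>P q. ?f (l(p := x, q := y))\<bar>)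
        = (\<Sum>x\<in>P p. \<bar>\<Sum>y\<in>P q. (w E x y - ?d) * (?A x * ?B y)\<bar>)"
      by simp
    also have "\<dots> \<le> 2 * \<epsilon> * card (P p) * card (P q)"
    proof (rule weighted_row_deviation_le)
      show "\<bar>?A x\<bar> \<le> 1" for x
        using homg_zero_one[of "G - ?Q" E "l(p := x)"] by auto
    qed (use assms(3-5) homg_zero_one in auto)
    finally show ?thesis .
  qed
  have card_eq: "card (PiE I P) = card (P p) * card (P q) * card (PiE (I - {q} - {p}) P)"
  proof -
    have "I - {q} - {p} = I - {p, q}" by auto
    then show ?thesis
      using assms(3-5) finite_index prod_remove2[OF finite_index, of p q "\<lambda>i. card (P i)"]
      by (simp add: card_PiE)
  qed
  have "fibre_deviation a b ?f \<le> (\<Sum>g\<in>PiE (I - {q}) P. \<bar>\<Sum>y\<in>P q. ?f (g(q := y))\<bar>)"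
    using fibre_deviation_le_sum_over_coordinate[OF assms(1,2,4), of ?f] by simp
  also have "\<dots> = (\<Sum>l\<in>PiE (I - {q} - {p}) P. \<Sum>x\<in>P p. \<bar>\<Sum>y\<in>P q. ?f (l(p := x, q := y))\<bar>)"
    using assms(3-5) by (intro sum_PiE_remove) auto
  also have "\<dots> \<le> (\<Sum>l\<in>PiE (I - {q} - {p}) P. 2 * \<epsilon> * card (P p) * card (P q))"
    by (intro sum_mono row)
  also have "\<dots> = 2 * \<epsilon> * card (PiE I P)"
    using card_eq by (simp add: mult_ac)
  finally show ?thesis .
qed

lemma fibre_deviation_any_edge_le:
  assumes "a \<in> I" "b \<in> I" "s \<in> I" "t \<in> I" "s \<noteq> t" "{s, t} \<noteq> {a, b}"
    and "finite G" "(s, t) \<notin> G" "(t, s) \<notin> G"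
  shows "fibre_deviation a b (\<lambda>g. (w E (g s) (g t) - density E (P s) (P t)) * homg G E g)
    \<le> 2 * \<epsilon> * card (PiE I P)"
proof -
  from assms(5,6) consider "t \<notin> {a, b}" | "s \<notin> {a, b}" by auto
  then show ?thesis
  proof cases
    case 1
    then show ?thesis using assms by (intro fibre_deviation_edge_le) auto
  next
    case 2
    then have "fibre_deviation a b (\<lambda>g. (w E (g t) (g s) - density E (P t) (P s)) * homg G E g)
        \<le> 2 * \<epsilon> * card (PiE I P)"
      using assms by (intro fibre_deviation_edge_le) auto
    moreover have "(\<lambda>g. (w E (g t) (g s) - density E (P t) (P s)) * homg G E g)
        = (\<lambda>g. (w E (g s) (g t) - density E (P s) (P t)) * homg G E g)"
      by (intro ext) (metis w_commute density_commute)
    ultimately show ?thesis by simp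
  qed
qed

lemma fibre_deviation_homg_le:
  assumes "a \<in> I" "b \<in> I" "finite G"
    and "\<And>s t. (s, t) \<in> G \<Longrightarrow> s \<in> I \<and> t \<in> I \<and> s < t \<and> {s, t} \<noteq> {a, b}"
  shows "fibre_deviation a b (\<lambda>g. homg G E g - (\<Prod>(i, j)\<in>G. density E (P i) (P j)))
    \<le> 2 * \<epsilon> * card G * card (PiE I P)"
  using assms(3,4)
proof (induction G rule: finite_induct)
  case empty
  then show ?case by (simp add: fibre_deviation_def homg_def)
next
  case (insert e G)
  obtain s t where e: "e = (s, t)" by fastforce
  have st: "s \<in> I" "t \<in> I" "s < t" "{s, t} \<noteq> {a, b}"
    using insert.prems[of s t] e by auto
  have not_in_G: "(s, t) \<notin> G" "(t, s) \<notin> G"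
    using insert.hyps(2) insert.prems[of t s] e st(3) by auto
  let ?d = "density E (P s) (P t)" and ?D = "\<lambda>G. \<Prod>(i, j)\<in>G. density E (P i) (P j)"
  have edge: "fibre_deviation a b (\<lambda>g. (w E (g s) (g t) - ?d) * homg G E g)
      \<le> 2 * \<epsilon> * card (PiE I P)"
    using assms(1,2) st not_in_G insert.hyps(1) by (intro fibre_deviation_any_edge_le) auto
  have rest: "fibre_deviation a b (\<lambda>g. ?d * (homg G E g - ?D G))
      \<le> 2 * \<epsilon> * card G * card (PiE I P)"
  proof -
    have "0 \<le> ?d" "?d \<le> 1" using density_bounds finite_part st(1,2) by auto
    then have "fibre_deviation a b (\<lambda>g. ?d * (homg G E g - ?D G))
        \<le> fibre_deviation a b (\<lambda>g. homg G E g - ?D G)"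
      by (simp add: fibre_deviation_scale fibre_deviation_nonneg mult_left_le_one_le)
    also have "\<dots> \<le> 2 * \<epsilon> * card G * card (PiE I P)"
      using insert.IH insert.prems by auto
    finally show ?thesis .
  qed
  have "homg (insert e G) E g - ?D (insert e G)
      = (w E (g s) (g t) - ?d) * homg G E g + ?d * (homg G E g - ?D G)" for g
    using insert.hyps e by (simp add: homg_def algebra_simps)
  then have "fibre_deviation a b (\<lambda>g. homg (insert e G) E g - ?D (insert e G))
      \<le> fibre_deviation a b (\<lambda>g. (w E (g s) (g t) - ?d) * homg G E g)
        + fibre_deviation a b (\<lambda>g. ?d * (homg G E g - ?D G))"
    by (simp only: fibre_deviation_add_le)
  also have "\<dots> \<le> 2 * \<epsilon> * card (insert e G) * card (PiE I P)"
    using add_mono[OF edge rest] insert.hyps by (simp add: algebra_simps)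
  finally show ?case .
qed

lemma card_fibre:
  assumes "a \<in> I" "b \<in> I" "a \<noteq> b" "xa \<in> P a" "xb \<in> P b"
  shows "real (card (fibre a b xa xb)) = (\<Prod>i\<in>I - {a, b}. real (card (P i)))"
proof -
  have "bij_betw (\<lambda>h. h(a := xa, b := xb)) (PiE (I - {a, b}) P) (fibre a b xa xb)"
    using assms
    by (intro bij_betw_byWitness[where f' = "\<lambda>g. g(a := undefined, b := undefined)"])
       (auto simp: fibre_def PiE_def extensional_def Pi_def)
  then show ?thesis
    using finite_index by (simp add: bij_betw_same_card[symmetric] card_PiE)
qed

lemma fibre_sum_homg_remove_edge_le:
  assumes "finite F" "(a, b) \<in> F" "a \<in> I" "b \<in> I" "a \<noteq> b" "xa \<in> P a" "xb \<in> P b"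
  shows "\<bar>(\<Sum>g\<in>fibre a b xa xb. homg F E g) - (\<Prod>i\<in>I - {a, b}. real (card (P i))) * (w E xa xb * D)\<bar>
    \<le> \<bar>\<Sum>g\<in>fibre a b xa xb. homg (F - {(a, b)}) E g - D\<bar>"
proof -
  have "homg F E g = w E xa xb * homg (F - {(a, b)}) E g" if "g \<in> fibre a b xa xb" for g
    using that prod.remove[OF assms(1,2), of "\<lambda>(i, j). w E (g i) (g j)"]
    unfolding homg_def fibre_def by simp
  then have "(\<Sum>g\<in>fibre a b xa xb. homg F E g) - (\<Prod>i\<in>I - {a, b}. real (card (P i))) * (w E xa xb * D)
      = w E xa xb * (\<Sum>g\<in>fibre a b xa xb. homg (F - {(a, b)}) E g - D)"
    using card_fibre[OF assms(3-7)]
    by (simp add: sum_subtractf sum_distrib_left algebra_simps)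
  then show ?thesis
    by (simp add: abs_mult w_def)
qed

lemma card_large_fibre_deviation_le:
  assumes "a \<in> I" "b \<in> I" "a \<noteq> b" "0 \<le> m" "m \<le> m'"
    and "fibre_deviation a b f \<le> 2 * \<epsilon> * m * card (PiE I P)"
  shows "card {(xa, xb) \<in> P a \<times> P b.
      (\<Prod>i\<in>I - {a, b}. real (card (P i))) * (sqrt \<epsilon> * m') < \<bar>\<Sum>g\<in>fibre a b xa xb. f g\<bar>}
    \<le> 2 * sqrt \<epsilon> * card (P a) * card (P b)"
proof (cases "P a = {} \<or> P b = {}")
  case False
  then have "0 \<le> \<epsilon>" using eps_nonneg assms(1-3) by blast
  let ?Q = "\<Prod>i\<in>I - {a, b}. real (card (P i))"
  let ?dev = "\<lambda>z. \<bar>\<Sum>g\<in>fibre a b (fst z) (snd z). f g\<bar>"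
  have card_eq: "real (card (PiE I P)) = card (P a) * card (P b) * ?Q"
    using assms(1-3) finite_index prod_remove2[OF finite_index, of a b "\<lambda>i. real (card (P i))"]
    by (simp add: card_PiE)
  have "(\<Sum>z\<in>P a \<times> P b. ?dev z) = fibre_deviation a b f"
    unfolding fibre_deviation_def split_def ..
  also have "\<dots> \<le> 2 * \<epsilon> * m' * card (PiE I P)"
    using assms(5,6) \<open>0 \<le> \<epsilon>\<close> by (intro order.trans[OF assms(6)] mult_right_mono mult_left_mono) auto
  also have "\<dots> = 2 * (sqrt \<epsilon> * sqrt \<epsilon>) * m' * (card (P a) * card (P b) * ?Q)"
    using \<open>0 \<le> \<epsilon>\<close> card_eq by simp
  also have "\<dots> = (2 * sqrt \<epsilon> * card (P a) * card (P b)) * (?Q * (sqrt \<epsilon> * m'))"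
    by (simp add: algebra_simps)
  finally have "card {z \<in> P a \<times> P b. ?Q * (sqrt \<epsilon> * m') < ?dev z}
      \<le> 2 * sqrt \<epsilon> * card (P a) * card (P b)"
    by (rule card_exceeding_le[rotated 4])
       (use assms(1,2,4,5) \<open>0 \<le> \<epsilon>\<close> finite_part in \<open>auto intro!: mult_nonneg_nonneg prod_nonneg\<close>)
  moreover have "{(xa, xb) \<in> P a \<times> P b. ?Q * (sqrt \<epsilon> * m') < \<bar>\<Sum>g\<in>fibre a b xa xb. f g\<bar>}
      = {z \<in> P a \<times> P b. ?Q * (sqrt \<epsilon> * m') < ?dev z}"
    by auto
  ultimately show ?thesis by simp
qed auto

lemma card_bad_pairs_le:
  assumes "finite F" "(a, b) \<in> F" "a \<in> I" "b \<in> I" "a < b"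
    and "\<And>s t. (s, t) \<in> F \<Longrightarrow> s \<in> I \<and> t \<in> I \<and> s < t"
  shows "card {(xa, xb) \<in> P a \<times> P b.
      \<not> \<bar>(\<Sum>g\<in>fibre a b xa xb. homg F E g) - (\<Prod>i\<in>I - {a, b}. real (card (P i))) *
          (w E xa xb * (\<Prod>(i, j)\<in>F - {(a, b)}. density E (P i) (P j)))\<bar>
        \<le> (\<Prod>i\<in>I - {a, b}. real (card (P i))) * (sqrt \<epsilon> * card F)}
    \<le> 2 * sqrt \<epsilon> * card (P a) * card (P b)"
    (is "real (card ?bad) \<le> _")
proof -
  let ?F' = "F - {(a, b)}" and ?Q = "\<Prod>i\<in>I - {a, b}. real (card (P i))"
  let ?D = "\<Prod>(i, j)\<in>?F'. density E (P i) (P j)"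
  let ?large = "{(xa, xb) \<in> P a \<times> P b.
    ?Q * (sqrt \<epsilon> * card F) < \<bar>\<Sum>g\<in>fibre a b xa xb. homg ?F' E g - ?D\<bar>}"
  have "fibre_deviation a b (\<lambda>g. homg ?F' E g - ?D) \<le> 2 * \<epsilon> * card ?F' * card (PiE I P)"
    using assms(1-5) by (intro fibre_deviation_homg_le) (auto simp: doubleton_eq_iff dest: assms(6))
  from card_large_fibre_deviation_le[OF assms(3,4) _ _ _ this, of "card F"]
  have large: "card ?large \<le> 2 * sqrt \<epsilon> * card (P a) * card (P b)"
    using assms(1,5) by (simp add: card_mono)
  have "?bad \<subseteq> ?large"
  proof
    fix z assume "z \<in> ?bad"
    then obtain xa xb where z: "z = (xa, xb)" "xa \<in> P a" "xb \<in> P b"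
      and "?Q * (sqrt \<epsilon> * card F) < \<bar>(\<Sum>g\<in>fibre a b xa xb. homg F E g) - ?Q * (w E xa xb * ?D)\<bar>"
      by auto
    then show "z \<in> ?large"
      using fibre_sum_homg_remove_edge_le[OF assms(1-4) _ z(2,3), of ?D] assms(5) by auto
  qed
  moreover have "finite ?large"
    using assms(3,4) finite_part by (auto intro: finite_subset[of _ "P a \<times> P b"])
  ultimately have "card ?bad \<le> card ?large"
    by (rule card_mono[rotated])
  with large show ?thesis by linarith
qed

end

theorem lemma40:
  fixes V :: "'v set" and E :: "'v \<Rightarrow> 'v \<Rightarrow> bool" and \<epsilon> :: real
    and k :: nat and P :: "nat \<Rightarrow> 'v set" and F :: "(nat \<times> nat) set" and a b :: nat
  assumes "graph V E"
    and "regular_partition \<epsilon> k P V E"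
    and "graph_on k F"
    and "(a, b) \<in> F"
  shows "real (card {(xa, xb) \<in> P a \<times> P b.
            \<not> \<bar>(\<Sum>g\<in>{g \<in> Pmaps k P. g a = xa \<and> g b = xb}. homg F E g)
                - (\<Prod>i\<in>{1..k} - {a, b}. real (card (P i))) *
                  (w E xa xb * (\<Prod>(i,j)\<in>F - {(a,b)}. density E (P i) (P j)))\<bar>
              \<le> (\<Prod>i\<in>{1..k} - {a, b}. real (card (P i))) * (sqrt \<epsilon> * real (card F))})
         \<le> 2 * real k * sqrt \<epsilon> * real (card (P a)) * real (card (P b))"
proof -
  define I where "I = {1..k}"
  have edges: "F \<subseteq> {(i, j). 1 \<le> i \<and> i < j \<and> j \<le> k}"
    using assms(3) unfolding graph_on_def .
  then have "finite F"
    by (rule finite_subset) (auto intro: finite_subset[of _ "{1..k} \<times> {1..k}"])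
  have ab: "a \<in> I" "b \<in> I" "a < b" using edges assms(4) unfolding I_def by auto
  interpret homogeneous_parts E P I \<epsilon>
  proof
    show "finite (P i)" if "i \<in> I" for i
      using assms(1,2) that unfolding graph_def regular_partition_def I_def
      by (metis UN_upper finite_subset)
  qed (use assms(1,2) in \<open>auto simp: graph_def regular_partition_def I_def\<close>)
  have F_edges: "\<And>s t. (s, t) \<in> F \<Longrightarrow> s \<in> I \<and> t \<in> I \<and> s < t"
    using edges unfolding I_def by auto
  have Pmaps_fibre: "{g \<in> Pmaps k P. g a = xa \<and> g b = xb} = fibre a b xa xb" for xa xb
    unfolding fibre_def unfolding Pmaps_def I_def ..
  note bad_le = card_bad_pairs_le[OF \<open>finite F\<close> assms(4) ab F_edges]
  then have "0 \<le> 2 * sqrt \<epsilon> * card (P a) * card (P b)"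
    by (meson of_nat_0_le_iff order.trans)
  moreover have "1 \<le> real k" using ab by (simp add: I_def)
  ultimately show ?thesis
    unfolding I_def[symmetric] Pmaps_fibre
    using bad_le mult_right_mono[of 1 "real k" "2 * sqrt \<epsilon> * card (P a) * card (P b)"]
    by (simp add: mult.assoc)
qed

end
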